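(* Let $\bm{W}_0$ and $\widetilde{\bm{W}}$ be real $(d+2)\times(d+2)$ matrices (indexed $0,\ldots,d+1$) whose directed graphs are both acyclic. Suppose that for every $j\in\{0,\ldots,d+1\}$, every parent of $j$ in the directed graph of $\bm{W}_0$ is an ancestor of $j$ in the directed graph of $\widetilde{\bm{W}}$. Then for every $j\in\{0,\ldots,d+1\}$, no descendant of $j$ in the directed graph of $\bm{W}_0$ is an ancestor of $j$ in the directed graph of $\widetilde{\bm{W}}$.
   Context: For a matrix $\bm{W}$, its directed graph has vertex set $\{0,\ldots,d+1\}$ and an arrow $i\to j$ iff $W_{j,i}\neq 0$; $i$ is a parent of $j$ if $i\to j$; $i$ is an ancestor of $j$ (and $j$ a descendant of $i$) if there is a directed path from $i$ to $j$ through distinct nodes with at least one step. *)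

theory Defs
  imports Complex_Main
begin

text \<open>A (d+2)x(d+2) real matrix indexed 0..d+1 is represented as W :: nat => nat => real,
  W j i being the (j,i) entry; only entries with indices <= d+1 matter.\<close>

definition vertices :: "nat \<Rightarrow> nat set" where
  "vertices d = {0..d+1}"

definition arrow :: "nat \<Rightarrow> (nat \<Rightarrow> nat \<Rightarrow> real) \<Rightarrow> nat \<Rightarrow> nat \<Rightarrow> bool" where
  "arrow d W i j \<longleftrightarrow> i \<in> vertices d \<and> j \<in> vertices d \<and> W j i \<noteq> 0"

definition parent :: "nat \<Rightarrow> (nat \<Rightarrow> nat \<Rightarrow> real) \<Rightarrow> nat \<Rightarrow> nat \<Rightarrow> bool" where
  "parent d W i j \<longleftrightarrow> arrow d W i j"

definition is_path :: "nat \<Rightarrow> (nat \<Rightarrow> nat \<Rightarrow> real) \<Rightarrow> nat list \<Rightarrow> nat \<Rightarrow> nat \<Rightarrow> bool" where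
  "is_path d W p i j \<longleftrightarrow> length p \<ge> 2 \<and> hd p = i \<and> last p = j \<and>
     (\<forall>k. Suc k < length p \<longrightarrow> arrow d W (p ! k) (p ! Suc k))"

definition ancestor :: "nat \<Rightarrow> (nat \<Rightarrow> nat \<Rightarrow> real) \<Rightarrow> nat \<Rightarrow> nat \<Rightarrow> bool" where
  "ancestor d W i j \<longleftrightarrow> (\<exists>p. is_path d W p i j \<and> distinct p)"

definition descendant :: "nat \<Rightarrow> (nat \<Rightarrow> nat \<Rightarrow> real) \<Rightarrow> nat \<Rightarrow> nat \<Rightarrow> bool" where
  "descendant d W j i \<longleftrightarrow> ancestor d W i j"

definition acyclic_graph :: "nat \<Rightarrow> (nat \<Rightarrow> nat \<Rightarrow> real) \<Rightarrow> bool" where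
  "acyclic_graph d W \<longleftrightarrow> (\<nexists>p i. is_path d W p i i)"

end

theory Submission
  imports Defs
begin

text \<open>Every arrow of \<open>W0\<close> lies on a path of \<open>Wt\<close>, so every path of \<open>W0\<close> from \<open>j\<close> to \<open>k\<close>
  becomes a path of \<open>Wt\<close>; together with a path of \<open>Wt\<close> from \<open>k\<close> back to \<open>j\<close> this closes a
  cycle in \<open>Wt\<close>.\<close>

lemma tranclp_iff_successively:
  "r\<^sup>+\<^sup>+ x y \<longleftrightarrow> (\<exists>xs. length xs \<ge> 2 \<and> hd xs = x \<and> last xs = y \<and> successively r xs)"
proof
  assume "r\<^sup>+\<^sup>+ x y"
  then show "\<exists>xs. length xs \<ge> 2 \<and> hd xs = x \<and> last xs = y \<and> successively r xs"
  proof (induction rule: tranclp_induct)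
    case (base y)
    then show ?case by (intro exI[of _ "[x, y]"]) simp
  next
    case (step y z)
    then obtain xs where "length xs \<ge> 2" "hd xs = x" "last xs = y" "successively r xs"
      by blast
    with \<open>r y z\<close> show ?case
      by (intro exI[of _ "xs @ [z]"]) (auto simp: successively_append_iff hd_append)
  qed
next
  assume "\<exists>xs. length xs \<ge> 2 \<and> hd xs = x \<and> last xs = y \<and> successively r xs"
  then obtain xs where "length xs \<ge> 2" "hd xs = x" "last xs = y" "successively r xs"
    by blast
  then show "r\<^sup>+\<^sup>+ x y"
  proof (induction xs arbitrary: x rule: induct_list012)
    case (3 a b rest)
    show ?case
    proof (cases rest)
      case Nil
      then show ?thesis using 3 by auto
    next
      case (Cons c rest')
      then have "r\<^sup>+\<^sup>+ b y" using "3.IH"(2)[of b] "3.prems" by simp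
      then show ?thesis using 3 by (auto intro: tranclp_into_tranclp2)
    qed
  qed simp_all
qed

lemma is_path_iff_successively:
  "is_path d W p i j \<longleftrightarrow> length p \<ge> 2 \<and> hd p = i \<and> last p = j \<and> successively (arrow d W) p"
  by (simp add: is_path_def successively_conv_nth)

lemma ex_is_path_iff_tranclp: "(\<exists>p. is_path d W p i j) \<longleftrightarrow> (arrow d W)\<^sup>+\<^sup>+ i j"
  by (simp add: is_path_iff_successively tranclp_iff_successively)

lemma ancestor_imp_tranclp: "ancestor d W i j \<Longrightarrow> (arrow d W)\<^sup>+\<^sup>+ i j"
  unfolding ancestor_def using ex_is_path_iff_tranclp by blast

lemma acyclic_graph_iff_tranclp: "acyclic_graph d W \<longleftrightarrow> (\<forall>i. \<not> (arrow d W)\<^sup>+\<^sup>+ i i)"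
  unfolding acyclic_graph_def ex_is_path_iff_tranclp[symmetric] by blast

lemma tranclp_mono_tranclp:
  assumes "\<And>x y. r x y \<Longrightarrow> s\<^sup>+\<^sup>+ x y" and "r\<^sup>+\<^sup>+ x y"
  shows "s\<^sup>+\<^sup>+ x y"
  using assms(2)
proof (induction rule: tranclp_induct)
  case (base y)
  then show ?case by (rule assms(1))
next
  case (step y z)
  then show ?case using assms(1) tranclp_trans by metis
qed

theorem lemma5:
  fixes d :: nat and W0 Wt :: "nat \<Rightarrow> nat \<Rightarrow> real"
  assumes "acyclic_graph d W0" and "acyclic_graph d Wt"
    and "\<forall>j\<in>vertices d. \<forall>i. parent d W0 i j \<longrightarrow> ancestor d Wt i j"
  shows "\<forall>j\<in>vertices d. \<forall>k. descendant d W0 k j \<longrightarrow> \<not> ancestor d Wt k j"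
proof (intro ballI allI impI notI)
  fix j k
  assume "descendant d W0 k j" and "ancestor d Wt k j"
  have arrow_W0_in_Wt: "(arrow d Wt)\<^sup>+\<^sup>+ a b" if "arrow d W0 a b" for a b
    using that assms(3) by (auto simp: parent_def arrow_def intro: ancestor_imp_tranclp)
  have "(arrow d Wt)\<^sup>+\<^sup>+ j k"
    using \<open>descendant d W0 k j\<close>
    by (auto simp: descendant_def intro: tranclp_mono_tranclp[OF arrow_W0_in_Wt]
        dest: ancestor_imp_tranclp)
  moreover have "(arrow d Wt)\<^sup>+\<^sup>+ k j"
    using \<open>ancestor d Wt k j\<close> by (rule ancestor_imp_tranclp)
  ultimately have "(arrow d Wt)\<^sup>+\<^sup>+ j j"
    by (rule tranclp_trans)
  with assms(2) show False
    by (simp add: acyclic_graph_iff_tranclp)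
qed

end
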